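(* Let $f\colon\prod_{i\in[n]}X_i\to Y$ and let $\varphi_k\colon X_k\to Y$ ($k\in[n]$) be maps satisfying the boundary condition $\varphi_k(0_{X_k})\le\varphi_k(x_k)\le\varphi_k(1_{X_k})$ for all $x_k\in X_k$. Suppose that for every $k\in[n]$ and every $\mathbf{x}\in\prod_{i\in[n]}X_i$, $$f(\mathbf{x})=\operatorname{med}\big(f(\mathbf{x}_k^0),\varphi_k(x_k),f(\mathbf{x}_k^1)\big).$$ Then $f(\mathbf{x})=p_0(\varphi_1(x_1),\ldots,\varphi_n(x_n))$ for all $\mathbf{x}$, where $p_0\colon Y^n\to Y$ is the polynomial function $$p_0(y_1,\ldots,y_n)=\bigvee_{I\subseteq[n]}\Big(f(\widehat{\mathbf{1}}_I)\wedge\bigwedge_{i\in I}y_i\Big).$$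
   Context: $Y$ is a finite distributive lattice with operations $\wedge,\vee$, least element $0$ and greatest element $1$. $[n]=\{1,\ldots,n\}$. $X_1,\ldots,X_n$ are arbitrary sets with at least two elements, and in each $X_k$ two distinct elements $0_{X_k},1_{X_k}$ (written $0,1$) are fixed. For $\mathbf{x}\in\prod_{i\in[n]}X_i$ and $a\in X_k$, $\mathbf{x}_k^a$ denotes the tuple agreeing with $\mathbf{x}$ except that its $k$-th component is $a$. For $I\subseteq[n]$, $\widehat{\mathbf{1}}_I\in\prod_{i\in[n]}X_i$ is the tuple whose $i$-th component is $1_{X_i}$ if $i\in I$ and $0_{X_i}$ otherwise. $\operatorname{med}(y_1,y_2,y_3)=(y_1\wedge y_2)\vee(y_2\wedge y_3)\vee(y_3\wedge y_1)$. An empty meet $\bigwedge_{i\in\emptyset}y_i$ equals $1$. *)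

theory Defs
  imports Main "HOL-Library.FuncSet"
begin

definition med :: "'b::lattice \<Rightarrow> 'b \<Rightarrow> 'b \<Rightarrow> 'b" where
  "med y1 y2 y3 = sup (sup (inf y1 y2) (inf y2 y3)) (inf y3 y1)"

definition prodX :: "nat \<Rightarrow> (nat \<Rightarrow> 'a set) \<Rightarrow> (nat \<Rightarrow> 'a) set" where
  "prodX n X = PiE {1..n} X"

definition upd_at :: "(nat \<Rightarrow> 'a) \<Rightarrow> nat \<Rightarrow> 'a \<Rightarrow> (nat \<Rightarrow> 'a)" where
  "upd_at x k a = x(k := a)"

definition hat_one :: "nat \<Rightarrow> (nat \<Rightarrow> 'a) \<Rightarrow> (nat \<Rightarrow> 'a) \<Rightarrow> nat set \<Rightarrow> (nat \<Rightarrow> 'a)" where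
  "hat_one n zero one I = (\<lambda>i. if i \<in> {1..n} then (if i \<in> I then one i else zero i) else undefined)"

text \<open>The polynomial function p_0 (empty meet = top, via Inf {} = top).\<close>
definition p0 :: "nat \<Rightarrow> ((nat \<Rightarrow> 'a) \<Rightarrow> 'b::finite_distrib_lattice) \<Rightarrow> (nat \<Rightarrow> 'a) \<Rightarrow> (nat \<Rightarrow> 'a)
                   \<Rightarrow> (nat \<Rightarrow> 'b) \<Rightarrow> 'b" where
  "p0 n f zero one y = Sup ((\<lambda>I. inf (f (hat_one n zero one I)) (Inf (y ` I))) ` Pow {1..n})"

end

theory Submission
  imports Defs
begin

(* Assume f satisfies f(x) = med(f(x_k^0), phi_k(x_k), f(x_k^1)) in every
   coordinate k, and each phi_k attains its least and greatest values at 0 and 1.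
   Specialising the median condition at x_k^0 and x_k^1 shows that f is
   monotone under the switch 0 -> 1 in each coordinate; then the median
   collapses to the "one-sided" form f(x) = f(x_k^0) \<or> (phi_k(x_k) \<and> f(x_k^1)).

   Expanding f by this identity in the coordinates 1, ..., k one after the other
   gives, by induction on k, the partial polynomial
     f(x) = \<Or>_{I \<subseteq> [k]} ( f(x with coordinates [k] set to 1_I) \<and> \<And>_{i\<in>I} phi_i(x_i) ),
   and for k = n the tuple in the first meetand no longer depends on x: it is
   the tuple 1-hat_I, so the partial polynomial is exactly p_0. *)

lemma med_ordered:
  fixes a b c :: "'b::distrib_lattice"
  assumes "a \<le> c"
  shows "med a b c = sup a (inf b c)"
proof -
  have "inf c a = a" using assms by (simp add: inf.absorb2)
  hence "med a b c = sup (sup (inf a b) (inf b c)) a" unfolding med_def by simp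
  also have "\<dots> = sup a (inf b c)"
    by (rule antisym) (auto simp: le_supI1 le_supI2)
  finally show ?thesis .
qed

text \<open>If both a and c are medians of themselves with middle arguments p \<le> q,
  then a \<le> c.  This is what makes f monotone under a 0-to-1 switch.\<close>
lemma med_fixpoints_ordered:
  fixes a p q c :: "'b::distrib_lattice"
  assumes a_med: "a = med a p c" and c_med: "c = med a q c" and "p \<le> q"
  shows "a \<le> c"
proof -
  have "med a p c \<le> sup p c" unfolding med_def
    by (auto simp: le_supI1 le_supI2)
  with a_med \<open>p \<le> q\<close> have a_le: "a \<le> sup q c"
    by (metis order_trans sup_mono order_refl)
  have "inf a q \<le> med a q c" unfolding med_def
    by (simp add: inf_commute le_supI1)
  with c_med have aq_le: "inf a q \<le> c" by simp
  have "a = inf a (sup q c)" using a_le by (simp add: inf.absorb1)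
  also have "\<dots> = sup (inf a q) (inf a c)" by (simp add: inf_sup_distrib1)
  also have "\<dots> \<le> c" using aq_le by simp
  finally show ?thesis .
qed

lemma SUP_Pow_Suc:
  fixes T :: "nat set \<Rightarrow> 'b::complete_lattice"
  shows "(SUP I\<in>Pow {1..k}. sup (T I) (T (insert (Suc k) I))) = (SUP I\<in>Pow {1..Suc k}. T I)"
proof -
  have "(SUP I\<in>Pow {1..k}. sup (T I) (T (insert (Suc k) I)))
      = sup (SUP I\<in>Pow {1..k}. T I) (SUP I\<in>Pow {1..k}. T (insert (Suc k) I))"
    by (rule Complete_Lattices.SUP_sup_distrib[symmetric])
  also have "\<dots> = (SUP I\<in>Pow {1..k} \<union> insert (Suc k) ` Pow {1..k}. T I)"
    by (simp add: SUP_union image_image)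
  also have "Pow {1..k} \<union> insert (Suc k) ` Pow {1..k} = Pow {1..Suc k}"
    by (simp add: atLeastAtMostSuc_conv Pow_insert)
  finally show ?thesis .
qed

text \<open>The hypotheses of the theorem, over any complete distributive lattice.\<close>
locale median_decomposable =
  fixes n :: nat
    and X :: "nat \<Rightarrow> 'a set"
    and zero one :: "nat \<Rightarrow> 'a"
    and f :: "(nat \<Rightarrow> 'a) \<Rightarrow> 'b::{complete_lattice, distrib_lattice}"
    and \<phi> :: "nat \<Rightarrow> 'a \<Rightarrow> 'b"
  assumes zero_in: "\<And>k. k \<in> {1..n} \<Longrightarrow> zero k \<in> X k"
    and one_in: "\<And>k. k \<in> {1..n} \<Longrightarrow> one k \<in> X k"
    and boundary: "\<And>k a. k \<in> {1..n} \<Longrightarrow> a \<in> X k \<Longrightarrow>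
                     \<phi> k (zero k) \<le> \<phi> k a \<and> \<phi> k a \<le> \<phi> k (one k)"
    and median: "\<And>k x. k \<in> {1..n} \<Longrightarrow> x \<in> prodX n X \<Longrightarrow>
                   f x = med (f (upd_at x k (zero k))) (\<phi> k (x k)) (f (upd_at x k (one k)))"
begin

definition switched :: "nat \<Rightarrow> (nat \<Rightarrow> 'a) \<Rightarrow> nat set \<Rightarrow> nat \<Rightarrow> 'a" where
  "switched k x I = (\<lambda>i. if i \<in> {1..k} then (if i \<in> I then one i else zero i) else x i)"

definition partial_poly :: "nat \<Rightarrow> (nat \<Rightarrow> 'a) \<Rightarrow> 'b" where
  "partial_poly k x =
     (SUP I\<in>Pow {1..k}. inf (f (switched k x I)) (Inf ((\<lambda>i. \<phi> i (x i)) ` I)))"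

lemma upd_in_prodX:
  assumes "z \<in> prodX n X" "k \<in> {1..n}" "a \<in> X k"
  shows "z(k := a) \<in> prodX n X"
  using assms unfolding prodX_def by (auto simp: PiE_def Pi_def extensional_def)

lemma switched_in_prodX:
  assumes "x \<in> prodX n X" "k \<le> n"
  shows "switched k x I \<in> prodX n X"
  using assms zero_in one_in unfolding prodX_def switched_def
  by (auto simp: PiE_def Pi_def extensional_def)

lemma switch_mono:
  assumes z: "z \<in> prodX n X" and k: "k \<in> {1..n}"
  shows "f (z(k := zero k)) \<le> f (z(k := one k))"
proof (rule med_fixpoints_ordered)
  have z0: "z(k := zero k) \<in> prodX n X" using upd_in_prodX z k zero_in by blast
  have z1: "z(k := one k) \<in> prodX n X" using upd_in_prodX z k one_in by blast
  show "f (z(k := zero k)) = med (f (z(k := zero k))) (\<phi> k (zero k)) (f (z(k := one k)))"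
    using median[OF k z0] by (simp add: upd_at_def)
  show "f (z(k := one k)) = med (f (z(k := zero k))) (\<phi> k (one k)) (f (z(k := one k)))"
    using median[OF k z1] by (simp add: upd_at_def)
  show "\<phi> k (zero k) \<le> \<phi> k (one k)" using boundary[OF k one_in[OF k]] by simp
qed

lemma one_sided_expansion:
  assumes z: "z \<in> prodX n X" and k: "k \<in> {1..n}"
  shows "f z = sup (f (z(k := zero k))) (inf (\<phi> k (z k)) (f (z(k := one k))))"
  using median[OF k z] med_ordered[OF switch_mono[OF z k]] by (simp add: upd_at_def)

lemma partial_poly_Suc:
  assumes x: "x \<in> prodX n X" and kn: "Suc k \<le> n"
  shows "partial_poly k x = partial_poly (Suc k) x"
proof -
  define M where "M I = Inf ((\<lambda>i. \<phi> i (x i)) ` I)" for I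
  define T where "T I = inf (f (switched (Suc k) x I)) (M I)" for I
  have sk: "Suc k \<in> {1..n}" using kn by simp
  have split_term: "inf (f (switched k x I)) (M I) = sup (T I) (T (insert (Suc k) I))"
    if I: "I \<subseteq> {1..k}" for I
  proof -
    let ?y = "switched k x I"
    have y0: "?y(Suc k := zero (Suc k)) = switched (Suc k) x I"
      using I by (auto simp: switched_def fun_eq_iff le_Suc_eq)
    have y1: "?y(Suc k := one (Suc k)) = switched (Suc k) x (insert (Suc k) I)"
      using I by (auto simp: switched_def fun_eq_iff le_Suc_eq)
    have "?y (Suc k) = x (Suc k)" by (simp add: switched_def)
    then have fy: "f ?y = sup (f (switched (Suc k) x I))
                     (inf (\<phi> (Suc k) (x (Suc k))) (f (switched (Suc k) x (insert (Suc k) I))))"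
      using one_sided_expansion[OF switched_in_prodX[OF x] sk] y0 y1 kn by simp
    have "M (insert (Suc k) I) = inf (\<phi> (Suc k) (x (Suc k))) (M I)"
      by (simp add: M_def)
    then show ?thesis unfolding fy T_def inf_sup_distrib2
      by (simp only: inf_assoc inf_commute inf_left_commute)
  qed
  have "partial_poly k x = (SUP I\<in>Pow {1..k}. sup (T I) (T (insert (Suc k) I)))"
    unfolding partial_poly_def M_def[symmetric] by (rule SUP_cong) (auto simp: split_term)
  also have "\<dots> = (SUP I\<in>Pow {1..Suc k}. T I)" by (rule SUP_Pow_Suc)
  finally show ?thesis unfolding partial_poly_def T_def M_def .
qed

lemma f_eq_partial_poly:
  assumes "x \<in> prodX n X" "k \<le> n"
  shows "f x = partial_poly k x"
  using assms(2)
proof (induction k)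
  case 0
  show ?case by (simp add: partial_poly_def switched_def)
next
  case (Suc k)
  then show ?case using partial_poly_Suc[OF assms(1)] by simp
qed

lemma switched_all:
  assumes "x \<in> prodX n X"
  shows "switched n x I = hat_one n zero one I"
  using assms unfolding switched_def hat_one_def prodX_def
  by (auto simp: PiE_def extensional_def)

theorem median_representation:
  assumes "x \<in> prodX n X"
  shows "f x = (SUP I\<in>Pow {1..n}. inf (f (hat_one n zero one I)) (Inf ((\<lambda>i. \<phi> i (x i)) ` I)))"
  using f_eq_partial_poly[OF assms order_refl] switched_all[OF assms]
  by (simp add: partial_poly_def)

end

theorem mainTheorem1:
  fixes n :: nat
    and X :: "nat \<Rightarrow> 'a set"
    and zero one :: "nat \<Rightarrow> 'a"
    and f :: "(nat \<Rightarrow> 'a) \<Rightarrow> 'b::finite_distrib_lattice"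
    and \<phi> :: "nat \<Rightarrow> 'a \<Rightarrow> 'b"
  assumes zero_in: "\<And>k. k \<in> {1..n} \<Longrightarrow> zero k \<in> X k"
    and one_in: "\<And>k. k \<in> {1..n} \<Longrightarrow> one k \<in> X k"
    and zero_ne_one: "\<And>k. k \<in> {1..n} \<Longrightarrow> zero k \<noteq> one k"
    and boundary: "\<And>k a. k \<in> {1..n} \<Longrightarrow> a \<in> X k \<Longrightarrow>
                     \<phi> k (zero k) \<le> \<phi> k a \<and> \<phi> k a \<le> \<phi> k (one k)"
    and median: "\<And>k x. k \<in> {1..n} \<Longrightarrow> x \<in> prodX n X \<Longrightarrow>
                   f x = med (f (upd_at x k (zero k))) (\<phi> k (x k)) (f (upd_at x k (one k)))"
  shows "\<forall>x \<in> prodX n X. f x = p0 n f zero one (\<lambda>i. \<phi> i (x i))"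
proof
  fix x assume x: "x \<in> prodX n X"
  interpret median_decomposable n X zero one f \<phi>
    using zero_in one_in boundary median by unfold_locales
  show "f x = p0 n f zero one (\<lambda>i. \<phi> i (x i))"
    unfolding p0_def by (rule median_representation[OF x])
qed

end
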